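(* Let $\mathtt{Hol}_{\mathfrak T}$ be a holistic model and $\gamma$ a formula. (1) If $\lnot\beta$ is a subformula of $\gamma$, then $\mathtt{Hol}^\gamma_{\mathfrak T}(\lnot\beta)={}^{\mathfrak D}\mathtt{NOT}^{(At(\beta))}_{\mathfrak T}(\mathtt{Hol}^\gamma_{\mathfrak T}(\beta))$. (2) If $\sqrt{id}\,\beta$ is a subformula of $\gamma$, then $\mathtt{Hol}^\gamma_{\mathfrak T}(\sqrt{id}\,\beta)={}^{\mathfrak D}\sqrt{\mathtt I}^{(At(\beta))}_{\mathfrak T}(\mathtt{Hol}^\gamma_{\mathfrak T}(\beta))$. (3) If $\sqrt{\lnot}\,\beta$ is a subformula of $\gamma$, then $\mathtt{Hol}^\gamma_{\mathfrak T}(\sqrt{\lnot}\,\beta)={}^{\mathfrak D}\sqrt{\mathtt{NOT}}^{(At(\beta))}_{\mathfrak T}(\mathtt{Hol}^\gamma_{\mathfrak T}(\beta))$.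
   Context: Hilbert spaces and states: for $n\ge1$, $\mathcal H^{(n)}=(\mathbb C^2)^{\otimes n}$ with canonical basis $|x_1,\dots,x_n\rangle=|x_1\rangle\otimes\cdots\otimes|x_n\rangle$ ($x_i\in\{0,1\}$, $|0\rangle=(1,0)$, $|1\rangle=(0,1)$); $\mathfrak D(\mathcal H^{(n)})$ is the set of density operators (qumixes) on $\mathcal H^{(n)}$. A truth-perspective is a unitary operator $\mathfrak T$ on $\mathbb C^2$, and $\mathfrak T^{(n)}=\mathfrak T\otimes\cdots\otimes\mathfrak T$ ($n$ factors). $^{\mathfrak T}P_1^{(n)}$ (resp. $^{\mathfrak T}P_0^{(n)}$) is the projection onto the span of the vectors $\mathfrak T^{(n)}|x_1,\dots,x_n\rangle$ with $x_n=1$ (resp. $x_n=0$). For $\rho$ on $\mathcal H^{(n_1)}\otimes\cdots\otimes\mathcal H^{(n_t)}$, $Red^{(j_1,\dots,j_s)}_{[n_1,\dots,n_t]}(\rho)$ is the reduced state (partial trace over all factors other than $j_1,\dots,j_s$). Gates (defined on the canonical basis and extended linearly): $\mathtt{NOT}^{(n)}|x_1,\dots,x_n\rangle=|x_1,\dots,x_{n-1}\rangle\otimes|1-x_n\rangle$; $\sqrt{\mathtt I}^{(n)}|x_1,\dots,x_n\rangle=|x_1,\dots,x_{n-1}\rangle\otimes\frac1{\sqrt2}((-1)^{x_n}|x_n\rangle+|1-x_n\rangle)$; $\sqrt{\mathtt{NOT}}^{(n)}|x_1,\dots,x_n\rangle=|x_1,\dots,x_{n-1}\rangle\otimes(\frac{1-i}{2}|x_n\rangle+\frac{1+i}{2}|1-x_n\rangle)$;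 $\mathtt{XOR}^{(m,n)}|x_1..x_m,y_1..y_n\rangle=|x_1..x_m,y_1..y_{n-1}\rangle\otimes|x_m\oplus y_n\rangle$; Toffoli $\mathtt T^{(m,n,p)}|x_1..x_m,y_1..y_n,z_1..z_p\rangle=|x_1..x_m,y_1..y_n,z_1..z_{p-1}\rangle\otimes|x_my_n\oplus z_p\rangle$ ($\oplus$ = addition mod 2). For a gate $G$ on $\mathcal H^{(n)}$: $G_{\mathfrak T}=\mathfrak T^{(n)}G\,\mathfrak T^{(n)\dagger}$ and $^{\mathfrak D}G_{\mathfrak T}(\rho)=G_{\mathfrak T}\rho G_{\mathfrak T}^\dagger$. Language: formulas are built from atomic formulas (among them two distinguished atoms $\mathbf t,\mathbf f$) with unary connectives $\lnot,\sqrt{id},\sqrt{\lnot}$, binary $\uplus$ and ternary $\intercal$. $At(\alpha)$ is the number of occurrences of atomic formulas in $\alpha$. Syntactical tree of $\alpha$: $Level_1^\alpha=(\alpha)$; $Level_{i+1}^\alpha$ is obtained from $Level_i^\alpha=(\beta_1,\dots,\beta_r)$ by replacing each non-atomic $\beta_j$ by the sequence of its immediate subformulas (its argument(s) in order) and keeping each atomic $\beta_j$; the last level $Level_h^\alpha$ ($h$ = height) lists all atomic occurrences. Then $\mathcal H^{(At(\alpha))}=\mathcal H^{(At(\beta_1))}\otimes\cdots\otimes\mathcal H^{(At(\beta_r))}$. The $\mathfrak T$-gate $G^\alpha_{\mathfrak T(i)}$ ($1\le i<h$) is the tensor product over $j$ of: the identity of $\mathbb C^2$ if $\beta_j$ is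 atomic; $\mathtt{NOT}_{\mathfrak T}^{(At(\beta))}$, $\sqrt{\mathtt I}_{\mathfrak T}^{(At(\beta))}$, $\sqrt{\mathtt{NOT}}_{\mathfrak T}^{(At(\beta))}$ if $\beta_j$ is $\lnot\beta$, $\sqrt{id}\beta$, $\sqrt\lnot\beta$; $\mathtt{XOR}_{\mathfrak T}^{(At(\beta'),At(\beta''))}$ if $\beta_j=\beta'\uplus\beta''$; $\mathtt T_{\mathfrak T}^{(At(\beta'),At(\beta''),At(\beta'''))}$ if $\beta_j=\intercal(\beta',\beta'',\beta''')$. Holistic model: a map $\mathtt{Hol}_{\mathfrak T}$ assigning to each level $Level_i^\alpha$ of each formula $\alpha$ a qumix $\mathtt{Hol}_{\mathfrak T}(Level_i^\alpha)\in\mathfrak D(\mathcal H^{(At(\alpha))})$ such that (a) $\mathtt{Hol}_{\mathfrak T}(Level_i^\alpha)={}^{\mathfrak D}G^\alpha_{\mathfrak T(i)}(\mathtt{Hol}_{\mathfrak T}(Level_{i+1}^\alpha))$ for $1\le i<h$; (b) (normality) for each formula $\gamma$, where the contextual meaning of the occurrence $\beta_j$ in $Level_i^\gamma=(\beta_1,\dots,\beta_r)$ is $Red^{(j)}_{[At(\beta_1),\dots,At(\beta_r)]}(\mathtt{Hol}_{\mathfrak T}(Level_i^\gamma))$, all occurrences of the same subformula $\beta$ in the syntactical tree of $\gamma$ have the same contextual meaning, denoted $\mathtt{Hol}^\gamma_{\mathfrak T}(\beta)$; (c) every occurrence of $\mathbf f$ (resp. $\mathbf t$) has contextual meaning $^{\mathfrak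 T}P_0^{(1)}$ (resp. $^{\mathfrak T}P_1^{(1)}$). *)

theory Defs
  imports "Jordan_Normal_Form.Matrix"
begin

text \<open>The canonical basis vector |x_1,...,x_n> corresponds to the index
  x_1 2^(n-1) + ... + x_n 2^0 (x_1 most significant), so that the Kronecker
  product below is the tensor product with the first factor most significant.\<close>

definition adj :: "complex mat \<Rightarrow> complex mat" where
  "adj A = mat (dim_col A) (dim_row A) (\<lambda>(i,j). cnj (A $$ (j,i)))"

definition kron :: "complex mat \<Rightarrow> complex mat \<Rightarrow> complex mat" where
  "kron A B = mat (dim_row A * dim_row B) (dim_col A * dim_col B)
     (\<lambda>(i,j). A $$ (i div dim_row B, j div dim_col B) * B $$ (i mod dim_row B, j mod dim_col B))"

fun kron_list :: "complex mat list \<Rightarrow> complex mat" where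
  "kron_list [] = 1\<^sub>m 1"
| "kron_list (A # As) = kron A (kron_list As)"

definition kron_pow :: "complex mat \<Rightarrow> nat \<Rightarrow> complex mat" where
  "kron_pow T n = kron_list (replicate n T)"

definition unitary_op :: "nat \<Rightarrow> complex mat \<Rightarrow> bool" where
  "unitary_op d U \<longleftrightarrow> U \<in> carrier_mat d d \<and> adj U * U = 1\<^sub>m d \<and> U * adj U = 1\<^sub>m d"

definition truth_perspective :: "complex mat \<Rightarrow> bool" where
  "truth_perspective T \<longleftrightarrow> unitary_op 2 T"

definition density :: "nat \<Rightarrow> complex mat \<Rightarrow> bool" where
  "density d \<rho> \<longleftrightarrow> \<rho> \<in> carrier_mat d d \<and> adj \<rho> = \<rho> \<and>
     (\<forall>v :: nat \<Rightarrow> complex. 0 \<le> Re (\<Sum>i<d. \<Sum>j<d. cnj (v i) * \<rho> $$ (i,j) * v j)) \<and>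
     (\<Sum>i<d. \<rho> $$ (i,i)) = 1"

text \<open>Reduced state Red^(j)_[d_0,...,d_(r-1)] (factor j, 0-based; dimensions of the factors)\<close>
definition Red :: "nat \<Rightarrow> nat list \<Rightarrow> complex mat \<Rightarrow> complex mat" where
  "Red j ds \<rho> =
     (let L = prod_list (take j ds); d = ds ! j; R = prod_list (drop (Suc j) ds) in
      mat d d (\<lambda>(a,b). \<Sum>l<L. \<Sum>r<R. \<rho> $$ ((l * d + a) * R + r, (l * d + b) * R + r)))"

definition Dgate :: "complex mat \<Rightarrow> complex mat \<Rightarrow> complex mat" where
  "Dgate G \<rho> = G * \<rho> * adj G"

definition conjT :: "complex mat \<Rightarrow> nat \<Rightarrow> complex mat \<Rightarrow> complex mat" where
  "conjT T n G = kron_pow T n * G * adj (kron_pow T n)"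

section \<open>Gates (defined on the canonical basis: column c is the image of basis vector c)\<close>

definition perm_gate :: "nat \<Rightarrow> (nat \<Rightarrow> nat) \<Rightarrow> complex mat" where
  "perm_gate N f = mat N N (\<lambda>(r,c). if r = f c then 1 else 0)"

text \<open>flipping the last qubit x_n (the least significant bit)\<close>
definition flip_last :: "nat \<Rightarrow> nat" where
  "flip_last c = (if even c then c + 1 else c - 1)"

definition NOT_gate :: "nat \<Rightarrow> complex mat" where
  "NOT_gate n = perm_gate (2 ^ n) flip_last"

definition SqrtI_gate :: "nat \<Rightarrow> complex mat" where
  "SqrtI_gate n = mat (2 ^ n) (2 ^ n) (\<lambda>(r,c).
     if r = c then (if even c then 1 else -1) / complex_of_real (sqrt 2)
     else if r = flip_last c then 1 / complex_of_real (sqrt 2) else 0)"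

definition SqrtNOT_gate :: "nat \<Rightarrow> complex mat" where
  "SqrtNOT_gate n = mat (2 ^ n) (2 ^ n) (\<lambda>(r,c).
     if r = c then (1 - \<i>) / 2
     else if r = flip_last c then (1 + \<i>) / 2 else 0)"

definition XOR_gate :: "nat \<Rightarrow> nat \<Rightarrow> complex mat" where
  "XOR_gate m n = perm_gate (2 ^ (m + n)) (\<lambda>c.
     let a = c div 2 ^ n; b = c mod 2 ^ n in
     a * 2 ^ n + (b - b mod 2 + (a mod 2 + b mod 2) mod 2))"

definition Toffoli_gate :: "nat \<Rightarrow> nat \<Rightarrow> nat \<Rightarrow> complex mat" where
  "Toffoli_gate m n p = perm_gate (2 ^ (m + n + p)) (\<lambda>c.
     let a = c div 2 ^ (n + p); b = (c div 2 ^ p) mod 2 ^ n; z = c mod 2 ^ p in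
     a * 2 ^ (n + p) + b * 2 ^ p + (z - z mod 2 + ((a mod 2) * (b mod 2) + z mod 2) mod 2))"

definition P1 :: "complex mat \<Rightarrow> nat \<Rightarrow> complex mat" where
  "P1 T n = kron_pow T n * mat (2 ^ n) (2 ^ n) (\<lambda>(r,c). if r = c \<and> odd c then 1 else 0)
            * adj (kron_pow T n)"

definition P0 :: "complex mat \<Rightarrow> nat \<Rightarrow> complex mat" where
  "P0 T n = kron_pow T n * mat (2 ^ n) (2 ^ n) (\<lambda>(r,c). if r = c \<and> even c then 1 else 0)
            * adj (kron_pow T n)"

datatype form =
    Atom nat
  | TT
  | FF
  | Neg form
  | SqId form
  | SqNeg form
  | Xor form form
  | Toff form form form

fun atomic :: "form \<Rightarrow> bool" where
  "atomic (Atom _) = True"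
| "atomic TT = True"
| "atomic FF = True"
| "atomic _ = False"

fun At :: "form \<Rightarrow> nat" where
  "At (Atom _) = 1"
| "At TT = 1"
| "At FF = 1"
| "At (Neg b) = At b"
| "At (SqId b) = At b"
| "At (SqNeg b) = At b"
| "At (Xor b c) = At b + At c"
| "At (Toff b c d) = At b + At c + At d"

fun subformulas :: "form \<Rightarrow> form set" where
  "subformulas (Neg b) = insert (Neg b) (subformulas b)"
| "subformulas (SqId b) = insert (SqId b) (subformulas b)"
| "subformulas (SqNeg b) = insert (SqNeg b) (subformulas b)"
| "subformulas (Xor b c) = insert (Xor b c) (subformulas b \<union> subformulas c)"
| "subformulas (Toff b c d) = insert (Toff b c d) (subformulas b \<union> subformulas c \<union> subformulas d)"
| "subformulas a = {a}"

fun expand :: "form \<Rightarrow> form list" where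
  "expand (Neg b) = [b]"
| "expand (SqId b) = [b]"
| "expand (SqNeg b) = [b]"
| "expand (Xor b c) = [b, c]"
| "expand (Toff b c d) = [b, c, d]"
| "expand a = [a]"

text \<open>Level_i^\<alpha> for i \<ge> 1 (1-based as in the paper)\<close>
definition level :: "form \<Rightarrow> nat \<Rightarrow> form list" where
  "level \<alpha> i = ((\<lambda>l. concat (map expand l)) ^^ (i - 1)) [\<alpha>]"

fun height :: "form \<Rightarrow> nat" where
  "height (Neg b) = Suc (height b)"
| "height (SqId b) = Suc (height b)"
| "height (SqNeg b) = Suc (height b)"
| "height (Xor b c) = Suc (max (height b) (height c))"
| "height (Toff b c d) = Suc (max (max (height b) (height c)) (height d))"
| "height a = 1"

text \<open>the factor of the T-gate G^\<alpha>_T(i) contributed by one item \<beta>_j of a level\<close>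
fun gate_item :: "complex mat \<Rightarrow> form \<Rightarrow> complex mat" where
  "gate_item T (Neg b) = conjT T (At b) (NOT_gate (At b))"
| "gate_item T (SqId b) = conjT T (At b) (SqrtI_gate (At b))"
| "gate_item T (SqNeg b) = conjT T (At b) (SqrtNOT_gate (At b))"
| "gate_item T (Xor b c) = conjT T (At b + At c) (XOR_gate (At b) (At c))"
| "gate_item T (Toff b c d) = conjT T (At b + At c + At d) (Toffoli_gate (At b) (At c) (At d))"
| "gate_item T a = 1\<^sub>m 2"

definition level_gate :: "complex mat \<Rightarrow> form \<Rightarrow> nat \<Rightarrow> complex mat" where
  "level_gate T \<alpha> i = kron_list (map (gate_item T) (level \<alpha> i))"

text \<open>the j-th item (0-based) of Level_i^\<alpha> is an occurrence of \<beta>\<close>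
definition occ :: "form \<Rightarrow> nat \<Rightarrow> nat \<Rightarrow> form \<Rightarrow> bool" where
  "occ \<alpha> i j \<beta> \<longleftrightarrow> 1 \<le> i \<and> i \<le> height \<alpha> \<and> j < length (level \<alpha> i) \<and> level \<alpha> i ! j = \<beta>"

definition ctx :: "(form \<Rightarrow> nat \<Rightarrow> complex mat) \<Rightarrow> form \<Rightarrow> nat \<Rightarrow> nat \<Rightarrow> complex mat" where
  "ctx Hol \<alpha> i j = Red j (map (\<lambda>b. 2 ^ At b) (level \<alpha> i)) (Hol \<alpha> i)"

text \<open>Hol \<alpha> i is the qumix Hol_T(Level_i^\<alpha>)\<close>
definition holistic :: "complex mat \<Rightarrow> (form \<Rightarrow> nat \<Rightarrow> complex mat) \<Rightarrow> bool" where
  "holistic T Hol \<longleftrightarrow>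
     (\<forall>\<alpha>.
       (\<forall>i. 1 \<le> i \<and> i \<le> height \<alpha> \<longrightarrow> density (2 ^ At \<alpha>) (Hol \<alpha> i)) \<and>
       (\<forall>i. 1 \<le> i \<and> i < height \<alpha> \<longrightarrow>
            Hol \<alpha> i = Dgate (level_gate T \<alpha> i) (Hol \<alpha> (Suc i))) \<and>
       (\<forall>\<beta> i j i' j'. occ \<alpha> i j \<beta> \<and> occ \<alpha> i' j' \<beta> \<longrightarrow> ctx Hol \<alpha> i j = ctx Hol \<alpha> i' j') \<and>
       (\<forall>i j. occ \<alpha> i j FF \<longrightarrow> ctx Hol \<alpha> i j = P0 T 1) \<and>
       (\<forall>i j. occ \<alpha> i j TT \<longrightarrow> ctx Hol \<alpha> i j = P1 T 1))"

text \<open>Hol^\<gamma>_T(\<beta>): the (common) contextual meaning of the occurrences of \<beta> in \<gamma>\<close>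
definition hol_meaning :: "(form \<Rightarrow> nat \<Rightarrow> complex mat) \<Rightarrow> form \<Rightarrow> form \<Rightarrow> complex mat" where
  "hol_meaning Hol \<gamma> \<beta> = (SOME M. \<exists>i j. occ \<gamma> i j \<beta> \<and> M = ctx Hol \<gamma> i j)"

end

theory Submission
  imports Defs
begin

text \<open>
  If a gate on \<open>H\<^sub>L \<otimes> H\<^sub>d \<otimes> H\<^sub>R\<close> is a tensor product \<open>A \<otimes> B \<otimes> C\<close> with \<open>A\<close> and
  \<open>C\<close> unitary, then the reduced state of the middle factor evolves by \<open>B\<close> alone, because a
  partial trace is invariant under unitaries acting on the traced-out factors. At the level of the
  syntactical tree of \<open>\<gamma>\<close> where an occurrence of \<open>\<not>\<beta>\<close> (or \<open>\<surd>id \<beta>\<close>, \<open>\<surd>\<not> \<beta>\<close>) sits, the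
  T-gate of the level has exactly this shape, with \<open>B\<close> the gate of the connective, and the next
  level carries \<open>\<beta>\<close> at the corresponding position with factors of the same total dimension on
  either side. So the contextual meaning of that occurrence of \<open>\<not>\<beta>\<close> is the image under the gate
  of the contextual meaning of the occurrence of \<open>\<beta>\<close> below it, and normality turns this into the
  statement about \<open>Hol\<^sup>\<gamma>\<close>. The remaining factors are unitary because every gate is:
  NOT, XOR and Toffoli permute the basis by a controlled flip of the last qubit, while \<open>\<surd>I\<close> and
  \<open>\<surd>NOT\<close> act on the last qubit only.
\<close>

section \<open>Adjoints, Kronecker products and unitary matrices\<close>

lemma sum_lessThan_mult:
  fixes f :: "nat \<Rightarrow> 'a::comm_monoid_add"
  shows "(\<Sum>k<m * n. f k) = (\<Sum>i<m. \<Sum>j<n. f (i * n + j))"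
proof -
  have "(\<Sum>j\<in>{i*n..<i*n+n}. f j) = (\<Sum>j<n. f (i * n + j))" for i
    using sum.shift_bounds_nat_ivl[of f 0 "i*n" n] by (simp add: lessThan_atLeast0 add.commute)
  then show ?thesis by (simp flip: sum.nat_group)
qed

lemma mult_index_less: "(i::nat) < m \<Longrightarrow> j < n \<Longrightarrow> i * n + j < m * n"
proof -
  assume "i < m" "j < n"
  then have "i * n + j < Suc i * n" by simp
  also have "\<dots> \<le> m * n" using \<open>i < m\<close> by (intro mult_le_mono1) simp
  finally show ?thesis .
qed

lemma index_mult_mat_sum:
  assumes "i < dim_row A" "j < dim_col B" "dim_col A = n" "dim_row B = n"
  shows "(A * B) $$ (i,j) = (\<Sum>k<n. A $$ (i,k) * B $$ (k,j))"
  using assms by (simp add: scalar_prod_def lessThan_atLeast0 row_def col_def)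

lemma dim_adj [simp]: "dim_row (adj A) = dim_col A" "dim_col (adj A) = dim_row A"
  by (simp_all add: adj_def)

lemma index_adj [simp]: "i < dim_col A \<Longrightarrow> j < dim_row A \<Longrightarrow> adj A $$ (i,j) = cnj (A $$ (j,i))"
  by (simp add: adj_def)

lemma adj_carrier_mat: "A \<in> carrier_mat m n \<Longrightarrow> adj A \<in> carrier_mat n m"
  by (metis carrier_matD carrier_matI dim_adj)

lemma adj_adj [simp]: "adj (adj A) = A"
  by (rule eq_matI) auto

lemma adj_one [simp]: "adj (1\<^sub>m n) = 1\<^sub>m n"
  by (rule eq_matI) auto

lemma adj_mult:
  assumes "A \<in> carrier_mat m n" "B \<in> carrier_mat n p"
  shows "adj (A * B) = adj B * adj A"
proof (rule eq_matI)
  fix i j assume "i < dim_row (adj B * adj A)" "j < dim_col (adj B * adj A)"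
  then have i: "i < p" and j: "j < m" using assms by auto
  have "adj (A * B) $$ (i,j) = cnj (\<Sum>k<n. A $$ (j,k) * B $$ (k,i))"
    using i j assms by (simp add: index_mult_mat_sum[symmetric])
  also have "\<dots> = (\<Sum>k<n. adj B $$ (i,k) * adj A $$ (k,j))"
    using i j assms by (simp add: mult.commute)
  also have "\<dots> = (adj B * adj A) $$ (i,j)"
    using i j assms by (intro index_mult_mat_sum[symmetric]) auto
  finally show "adj (A * B) $$ (i,j) = (adj B * adj A) $$ (i,j)" .
qed (use assms in auto)

lemma index_mult_mat_adj_sum:
  assumes "G \<in> carrier_mat N N" "\<rho> \<in> carrier_mat N N" "x < N" "y < N"
  shows "(G * \<rho> * adj G) $$ (x,y) = (\<Sum>k<N. \<Sum>l<N. G $$ (x,k) * \<rho> $$ (k,l) * cnj (G $$ (y,l)))"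
proof -
  have "(G * \<rho> * adj G) $$ (x,y) = (\<Sum>l<N. (G * \<rho>) $$ (x,l) * adj G $$ (l,y))"
    using assms by (intro index_mult_mat_sum) auto
  also have "\<dots> = (\<Sum>l<N. (\<Sum>k<N. G $$ (x,k) * \<rho> $$ (k,l)) * cnj (G $$ (y,l)))"
  proof (intro sum.cong refl)
    fix l assume "l \<in> {..<N}"
    with assms show "(G * \<rho>) $$ (x,l) * adj G $$ (l,y) = (\<Sum>k<N. G $$ (x,k) * \<rho> $$ (k,l)) * cnj (G $$ (y,l))"
      by (subst index_mult_mat_sum[of _ _ _ _ N]) auto
  qed
  also have "\<dots> = (\<Sum>l<N. \<Sum>k<N. G $$ (x,k) * \<rho> $$ (k,l) * cnj (G $$ (y,l)))"
    by (simp add: sum_distrib_right)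
  also have "\<dots> = (\<Sum>k<N. \<Sum>l<N. G $$ (x,k) * \<rho> $$ (k,l) * cnj (G $$ (y,l)))"
    by (rule sum.swap)
  finally show ?thesis .
qed

lemma dim_kron [simp]:
  "dim_row (kron A B) = dim_row A * dim_row B" "dim_col (kron A B) = dim_col A * dim_col B"
  by (simp_all add: kron_def)

lemma kron_carrier_mat:
  "A \<in> carrier_mat a b \<Longrightarrow> B \<in> carrier_mat c d \<Longrightarrow> kron A B \<in> carrier_mat (a * c) (b * d)"
  by (metis carrier_matD carrier_matI dim_kron)

lemma index_kron:
  "i < dim_row A * dim_row B \<Longrightarrow> j < dim_col A * dim_col B \<Longrightarrow>
   kron A B $$ (i,j) = A $$ (i div dim_row B, j div dim_col B) * B $$ (i mod dim_row B, j mod dim_col B)"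
  by (simp add: kron_def)

lemma index_kron_block:
  assumes "A \<in> carrier_mat a b" "B \<in> carrier_mat c d" "i < a" "j < b" "k < c" "l < d"
  shows "kron A B $$ (i * c + k, j * d + l) = A $$ (i,j) * B $$ (k,l)"
  using assms by (simp add: index_kron mult_index_less)

lemma mod_mult_div_eq_div_mod: "(i::nat) mod (b * c) div c = i div c mod b"
  by (metis add.right_neutral div_mult_self4 mod_by_0 mod_div_trivial mod_mult2_eq
      mod_mult_self1_is_0 mult.commute)

lemma kron_assoc: "kron (kron A B) C = kron A (kron B C)"
proof (rule eq_matI)
  fix i j assume "i < dim_row (kron A (kron B C))" "j < dim_col (kron A (kron B C))"
  then have i: "i < dim_row A * dim_row B * dim_row C" and j: "j < dim_col A * dim_col B * dim_col C"
    by (simp_all add: mult.assoc)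
  have "0 < dim_row B * dim_row C" "0 < dim_col B * dim_col C"
    using i j by (metis mult.assoc mult_eq_0_iff not_gr_zero not_less_zero)+
  then have "i mod (dim_row B * dim_row C) < dim_row B * dim_row C"
    "j mod (dim_col B * dim_col C) < dim_col B * dim_col C" by simp_all
  moreover have "i div (dim_row B * dim_row C) = i div dim_row C div dim_row B"
    "j div (dim_col B * dim_col C) = j div dim_col C div dim_col B"
    by (simp_all add: div_mult2_eq[symmetric] mult.commute)
  ultimately show "kron (kron A B) C $$ (i,j) = kron A (kron B C) $$ (i,j)"
    using i j by (simp add: index_kron less_mult_imp_div_less mod_mult_div_eq_div_mod mod_mod_cancel)
qed (simp_all add: mult.assoc)

lemma kron_one_left: "kron (1\<^sub>m 1) A = A"
  by (rule eq_matI) (auto simp: index_kron)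

lemma kron_list_append: "kron_list (xs @ ys) = kron (kron_list xs) (kron_list ys)"
  by (induction xs) (simp_all add: kron_one_left[simplified] kron_assoc)

lemma adj_kron: "adj (kron A B) = kron (adj A) (adj B)"
proof (rule eq_matI)
  fix i j assume "i < dim_row (kron (adj A) (adj B))" "j < dim_col (kron (adj A) (adj B))"
  then have i: "i < dim_col A * dim_col B" and j: "j < dim_row A * dim_row B" by simp_all
  then have "i mod dim_col B < dim_col B" "j mod dim_row B < dim_row B"
    by (metis mod_less_divisor mult_eq_0_iff not_gr_zero not_less_zero)+
  with i j show "adj (kron A B) $$ (i,j) = kron (adj A) (adj B) $$ (i,j)"
    by (simp add: index_kron less_mult_imp_div_less)
qed simp_all

lemma mult_kron:
  assumes A: "A \<in> carrier_mat a b" and C: "C \<in> carrier_mat b c"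
    and B: "B \<in> carrier_mat d e" and D: "D \<in> carrier_mat e f"
  shows "kron A B * kron C D = kron (A * C) (B * D)"
proof (rule eq_matI)
  fix i j assume "i < dim_row (kron (A * C) (B * D))" "j < dim_col (kron (A * C) (B * D))"
  then have i: "i < a * d" and j: "j < c * f" using assms by simp_all
  then have "i mod d < d" "j mod f < f"
    by (metis mod_less_divisor mult_eq_0_iff not_gr_zero not_less_zero)+
  moreover have "i div d < a" "j div f < c"
    using i j by (simp_all add: less_mult_imp_div_less)
  ultimately have row_col: "(A * C) $$ (i div d, j div f) = (\<Sum>k<b. A $$ (i div d, k) * C $$ (k, j div f))"
      "(B * D) $$ (i mod d, j mod f) = (\<Sum>l<e. B $$ (i mod d, l) * D $$ (l, j mod f))"
    using assms by (auto intro!: index_mult_mat_sum simp del: index_mult_mat)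
  have "(kron A B * kron C D) $$ (i,j) = (\<Sum>k<b * e. kron A B $$ (i,k) * kron C D $$ (k,j))"
    using assms i j by (intro index_mult_mat_sum) auto
  also have "\<dots> = (\<Sum>k<b. \<Sum>l<e. A $$ (i div d, k) * C $$ (k, j div f) * (B $$ (i mod d, l) * D $$ (l, j mod f)))"
    using assms i j by (simp add: sum_lessThan_mult index_kron mult_index_less mult_ac)
  also have "\<dots> = (A * C) $$ (i div d, j div f) * (B * D) $$ (i mod d, j mod f)"
    by (simp add: row_col sum_product)
  also have "\<dots> = kron (A * C) (B * D) $$ (i,j)"
    using assms i j by (simp add: index_kron)
  finally show "(kron A B * kron C D) $$ (i,j) = kron (A * C) (B * D) $$ (i,j)" .
qed (use assms in simp_all)

lemma kron_one_one: "kron (1\<^sub>m m) (1\<^sub>m n) = 1\<^sub>m (m * n)"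
proof (rule eq_matI)
  fix i j assume "i < dim_row (1\<^sub>m (m * n))" "j < dim_col (1\<^sub>m (m * n))"
  then have i: "i < m * n" and j: "j < m * n" by simp_all
  then have "0 < n" by (metis mult_eq_0_iff not_gr_zero not_less_zero)
  moreover have "i = j \<longleftrightarrow> i div n = j div n \<and> i mod n = j mod n"
    by (metis div_mult_mod_eq)
  ultimately show "kron (1\<^sub>m m) (1\<^sub>m n) $$ (i,j) = 1\<^sub>m (m * n) $$ (i,j)"
    using i j by (simp add: index_kron less_mult_imp_div_less)
qed simp_all

lemma unitary_one: "unitary_op n (1\<^sub>m n)"
  by (simp add: unitary_op_def)

lemma unitary_adj: "unitary_op n U \<Longrightarrow> unitary_op n (adj U)"
  by (auto simp: unitary_op_def adj_carrier_mat)

lemma unitary_mult: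
  assumes "unitary_op n U" "unitary_op n V"
  shows "unitary_op n (U * V)"
proof -
  have U: "U \<in> carrier_mat n n" "adj U \<in> carrier_mat n n" "adj U * U = 1\<^sub>m n" "U * adj U = 1\<^sub>m n"
    and V: "V \<in> carrier_mat n n" "adj V \<in> carrier_mat n n" "adj V * V = 1\<^sub>m n" "V * adj V = 1\<^sub>m n"
    using assms by (auto simp: unitary_op_def adj_carrier_mat)
  have "adj (U * V) * (U * V) = adj V * ((adj U * U) * V)"
    using U(1,2) V(1,2) by (simp add: adj_mult[OF U(1) V(1)] assoc_mult_mat[of _ n n _ n _ n])
  moreover have "U * V * adj (U * V) = U * ((V * adj V) * adj U)"
    using U(1,2) V(1,2) by (simp add: adj_mult[OF U(1) V(1)] assoc_mult_mat[of _ n n _ n _ n])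
  ultimately show ?thesis
    using U V by (simp add: unitary_op_def)
qed

lemma unitary_kron:
  assumes "unitary_op m U" "unitary_op n V"
  shows "unitary_op (m * n) (kron U V)"
proof -
  have U: "U \<in> carrier_mat m m" "adj U \<in> carrier_mat m m" "adj U * U = 1\<^sub>m m" "U * adj U = 1\<^sub>m m"
    and V: "V \<in> carrier_mat n n" "adj V \<in> carrier_mat n n" "adj V * V = 1\<^sub>m n" "V * adj V = 1\<^sub>m n"
    using assms by (auto simp: unitary_op_def adj_carrier_mat)
  then show ?thesis
    by (simp add: unitary_op_def adj_kron mult_kron kron_one_one kron_carrier_mat)
qed

lemma unitary_kron_pow: "unitary_op 2 T \<Longrightarrow> unitary_op (2 ^ n) (kron_pow T n)"
  by (induction n) (simp_all add: kron_pow_def unitary_one unitary_kron)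

lemma unitary_conjT: "unitary_op 2 T \<Longrightarrow> unitary_op (2 ^ n) G \<Longrightarrow> unitary_op (2 ^ n) (conjT T n G)"
  unfolding conjT_def by (intro unitary_mult unitary_adj unitary_kron_pow)

section \<open>Gates\<close>

lemma flip_last_div2 [simp]: "flip_last c div 2 = c div 2"
  by (auto simp: flip_last_def elim!: evenE oddE)

lemma even_flip_last [simp]: "even (flip_last c) \<longleftrightarrow> odd c"
  by (auto simp: flip_last_def elim!: oddE)

lemma flip_last_flip_last [simp]: "flip_last (flip_last c) = c"
  by (auto simp: flip_last_def elim!: evenE oddE)

lemma flip_last_less: "even N \<Longrightarrow> c < N \<Longrightarrow> flip_last c < N"
  by (auto simp: flip_last_def elim!: evenE oddE)

lemma eq_flip_last_iff: "r = flip_last c \<longleftrightarrow> r div 2 = c div 2 \<and> r mod 2 \<noteq> c mod 2"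
proof -
  have "r = flip_last c \<longleftrightarrow> r div 2 = flip_last c div 2 \<and> r mod 2 = flip_last c mod 2"
    by (metis div_mult_mod_eq)
  then show ?thesis
    by (auto simp: mod2_eq_if)
qed

lemma flip_last_add_mult_even: "even m \<Longrightarrow> flip_last (m * k + c) = m * k + flip_last c"
  by (auto simp: flip_last_def dest: odd_pos)

lemma last_bit_update: "(b::nat) - b mod 2 + (x + b mod 2) mod 2 = (if odd x then flip_last b else b)"
proof (cases "even b")
  case True
  then show ?thesis by (simp add: flip_last_def mod2_eq_if)
next
  case False
  then have "b mod 2 = 1" "(x + 1) mod 2 = (if odd x then 0 else 1)"
    by (simp_all add: odd_iff_mod_2_eq_one mod2_eq_if)
  with False show ?thesis by (simp add: flip_last_def)
qed

lemma perm_gate_cong: "(\<And>c. c < N \<Longrightarrow> f c = g c) \<Longrightarrow> perm_gate N f = perm_gate N g"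
  unfolding perm_gate_def by (rule eq_matI) auto

text \<open>Flip the last qubit if the control predicate holds of the remaining ones; NOT, XOR and
  Toffoli permute the basis in this way.\<close>

definition flip_last_if :: "(nat \<Rightarrow> bool) \<Rightarrow> nat \<Rightarrow> nat" where
  "flip_last_if P c = (if P (c div 2) then flip_last c else c)"

lemma flip_last_if_involution: "flip_last_if P (flip_last_if P c) = c"
  by (simp add: flip_last_if_def)

lemma flip_last_if_less: "even N \<Longrightarrow> c < N \<Longrightarrow> flip_last_if P c < N"
  by (simp add: flip_last_if_def flip_last_less)

lemma NOT_gate_flip_last_if: "NOT_gate n = perm_gate (2 ^ n) (flip_last_if (\<lambda>_. True))"
  by (simp add: NOT_gate_def flip_last_if_def[abs_def])

lemma XOR_gate_flip_last_if:
  assumes "1 \<le> n"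
  shows "XOR_gate m n = perm_gate (2 ^ (m + n)) (flip_last_if (\<lambda>q. odd (q div 2 ^ (n - 1))))"
proof -
  have "c div 2 ^ n * 2 ^ n + (c mod 2 ^ n - c mod 2 ^ n mod 2 + (c div 2 ^ n mod 2 + c mod 2 ^ n mod 2) mod 2)
        = flip_last_if (\<lambda>q. odd (q div 2 ^ (n - 1))) c" (is "?lhs = _") for c :: nat
  proof -
    define a where "a = c div 2 ^ n"
    define b where "b = c mod 2 ^ n"
    have ev: "even ((2::nat) ^ n)" using assms by simp
    have a: "a = c div 2 div 2 ^ (n - 1)"
      using assms by (cases n) (simp_all add: a_def div_mult2_eq)
    have c: "c = 2 ^ n * a + b" by (simp add: a_def b_def)
    have "?lhs = 2 ^ n * a + (if odd a then flip_last b else b)"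
      unfolding a_def[symmetric] b_def[symmetric] last_bit_update by simp
    also have "\<dots> = (if odd a then flip_last c else c)"
      unfolding c by (simp add: flip_last_add_mult_even[OF ev])
    also have "\<dots> = flip_last_if (\<lambda>q. odd (q div 2 ^ (n - 1))) c"
      by (simp only: flip_last_if_def a)
    finally show ?thesis .
  qed
  then show ?thesis
    unfolding XOR_gate_def Let_def by (rule perm_gate_cong)
qed

lemma Toffoli_gate_flip_last_if:
  assumes "1 \<le> p"
  shows "Toffoli_gate m n p = perm_gate (2 ^ (m + n + p))
    (flip_last_if (\<lambda>q. odd (q div 2 ^ (n + p - 1)) \<and> odd (q div 2 ^ (p - 1) mod 2 ^ n)))"
proof -
  have "c div 2 ^ (n + p) * 2 ^ (n + p) + (c div 2 ^ p) mod 2 ^ n * 2 ^ p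
      + (c mod 2 ^ p - c mod 2 ^ p mod 2
         + ((c div 2 ^ (n + p) mod 2) * ((c div 2 ^ p) mod 2 ^ n mod 2) + c mod 2 ^ p mod 2) mod 2)
    = flip_last_if (\<lambda>q. odd (q div 2 ^ (n + p - 1)) \<and> odd (q div 2 ^ (p - 1) mod 2 ^ n)) c"
    (is "?lhs = _") for c :: nat
  proof -
    define a where "a = c div 2 ^ (n + p)"
    define b where "b = c div 2 ^ p mod 2 ^ n"
    define z where "z = c mod 2 ^ p"
    have ev: "even ((2::nat) ^ p)" using assms by simp
    have ab: "a = c div 2 div 2 ^ (n + p - 1)" "b = c div 2 div 2 ^ (p - 1) mod 2 ^ n"
      using assms by (cases p; simp add: a_def b_def div_mult2_eq)+
    have "a = c div 2 ^ p div 2 ^ n"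
      by (simp add: a_def div_mult2_eq[symmetric] power_add[symmetric] add.commute)
    then have "c div 2 ^ p = a * 2 ^ n + b"
      using div_mult_mod_eq[of "c div 2 ^ p" "2 ^ n"] by (simp only: b_def)
    then have c: "c = 2 ^ p * (a * 2 ^ n + b) + z"
      by (metis z_def div_mult_mod_eq mult.commute)
    have "?lhs = 2 ^ p * (a * 2 ^ n + b) + (if odd a \<and> odd b then flip_last z else z)"
      unfolding a_def[symmetric] b_def[symmetric] z_def[symmetric] last_bit_update
      by (simp add: power_add algebra_simps)
    also have "\<dots> = (if odd a \<and> odd b then flip_last c else c)"
      unfolding c by (simp add: flip_last_add_mult_even[OF ev])
    also have "\<dots> = flip_last_if (\<lambda>q. odd (q div 2 ^ (n + p - 1)) \<and> odd (q div 2 ^ (p - 1) mod 2 ^ n)) c"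
      by (simp only: flip_last_if_def ab)
    finally show ?thesis .
  qed
  then show ?thesis
    unfolding Toffoli_gate_def Let_def by (rule perm_gate_cong)
qed

lemma unitary_perm_gate:
  assumes "\<And>c. c < N \<Longrightarrow> f c < N" "\<And>c. c < N \<Longrightarrow> f (f c) = c"
  shows "unitary_op N (perm_gate N f)"
proof -
  let ?P = "perm_gate N f"
  have "?P * ?P = 1\<^sub>m N"
  proof (rule eq_matI)
    fix i j assume "i < dim_row (1\<^sub>m N)" "j < dim_col (1\<^sub>m N)"
    then have i: "i < N" and j: "j < N" by simp_all
    have "(?P * ?P) $$ (i,j) = (\<Sum>k<N. ?P $$ (i,k) * ?P $$ (k,j))"
      using i j by (intro index_mult_mat_sum) (simp_all add: perm_gate_def)
    also have "\<dots> = (\<Sum>k<N. if k = f j then (if i = f (f j) then 1 else 0) else 0)"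
      using i j by (intro sum.cong) (auto simp: perm_gate_def)
    also have "\<dots> = (if i = j then 1 else 0)"
      using j assms by simp
    finally show "(?P * ?P) $$ (i,j) = 1\<^sub>m N $$ (i,j)" using i j by simp
  qed (simp_all add: perm_gate_def)
  moreover have "adj ?P = ?P"
    using assms by (intro eq_matI) (auto simp: perm_gate_def)
  ultimately show ?thesis
    by (simp add: unitary_op_def perm_gate_def)
qed

lemma unitary_perm_gate_flip_last_if: "even N \<Longrightarrow> unitary_op N (perm_gate N (flip_last_if P))"
  by (intro unitary_perm_gate flip_last_if_less flip_last_if_involution)

lemma index_mult_mat_2:
  assumes "A \<in> carrier_mat 2 2" "B \<in> carrier_mat 2 2" "i < 2" "j < 2"
  shows "(A * B) $$ (i,j) = A $$ (i,0) * B $$ (0,j) + A $$ (i,1) * B $$ (1,j)"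
  using assms by (subst index_mult_mat_sum[of _ _ _ _ 2]) (simp_all add: numeral_2_eq_2)

lemma unitary_2:
  assumes U: "U \<in> carrier_mat 2 2"
    and "cnj (U $$ (0,0)) * U $$ (0,0) + cnj (U $$ (1,0)) * U $$ (1,0) = 1"
    and "cnj (U $$ (0,1)) * U $$ (0,1) + cnj (U $$ (1,1)) * U $$ (1,1) = 1"
    and orth_cols: "cnj (U $$ (0,0)) * U $$ (0,1) + cnj (U $$ (1,0)) * U $$ (1,1) = 0"
    and "U $$ (0,0) * cnj (U $$ (0,0)) + U $$ (0,1) * cnj (U $$ (0,1)) = 1"
    and "U $$ (1,0) * cnj (U $$ (1,0)) + U $$ (1,1) * cnj (U $$ (1,1)) = 1"
    and orth_rows: "U $$ (0,0) * cnj (U $$ (1,0)) + U $$ (0,1) * cnj (U $$ (1,1)) = 0"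
  shows "unitary_op 2 U"
proof -
  have dims: "dim_row U = 2" "dim_col U = 2" and aU: "adj U \<in> carrier_mat 2 2"
    using U by (auto simp: adj_carrier_mat)
  have "cnj (U $$ (0,1)) * U $$ (0,0) + cnj (U $$ (1,1)) * U $$ (1,0) = 0"
    "U $$ (1,0) * cnj (U $$ (0,0)) + U $$ (1,1) * cnj (U $$ (0,1)) = 0"
    using arg_cong[OF orth_cols, of cnj] arg_cong[OF orth_rows, of cnj] by (simp_all add: mult.commute)
  note entries = assms(2-7) this
  have "adj U * U = 1\<^sub>m 2"
  proof (rule eq_matI)
    fix i j assume "i < dim_row (1\<^sub>m 2)" "j < dim_col (1\<^sub>m 2)"
    then have "i = 0 \<or> i = 1" "j = 0 \<or> j = 1" by auto
    then show "(adj U * U) $$ (i,j) = 1\<^sub>m 2 $$ (i,j)"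
      using entries by (auto simp: index_mult_mat_2[OF aU U] dims simp del: index_mult_mat)
  qed (simp_all add: dims)
  moreover have "U * adj U = 1\<^sub>m 2"
  proof (rule eq_matI)
    fix i j assume "i < dim_row (1\<^sub>m 2)" "j < dim_col (1\<^sub>m 2)"
    then have "i = 0 \<or> i = 1" "j = 0 \<or> j = 1" by auto
    then show "(U * adj U) $$ (i,j) = 1\<^sub>m 2 $$ (i,j)"
      using entries by (auto simp: index_mult_mat_2[OF U aU] dims simp del: index_mult_mat)
  qed (simp_all add: dims)
  ultimately show ?thesis
    using U by (simp add: unitary_op_def)
qed

lemma unitary_SqrtI_1: "unitary_op 2 (SqrtI_gate 1)"
proof -
  define s where "s = 1 / complex_of_real (sqrt 2)"
  have entries: "SqrtI_gate 1 $$ (0,0) = s" "SqrtI_gate 1 $$ (0,1) = s"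
    "SqrtI_gate 1 $$ (1,0) = s" "SqrtI_gate 1 $$ (1,1) = - s"
    by (simp_all add: SqrtI_gate_def flip_last_def s_def)
  have s: "cnj s = s" "s * s = 1 / 2"
    by (simp_all add: s_def flip: of_real_mult)
  have "SqrtI_gate 1 \<in> carrier_mat 2 2"
    by (simp add: SqrtI_gate_def carrier_matI)
  then show ?thesis
    by (rule unitary_2) (simp_all only: entries, simp_all add: s)
qed

lemma unitary_SqrtNOT_1: "unitary_op 2 (SqrtNOT_gate 1)"
proof -
  have entries: "SqrtNOT_gate 1 $$ (0,0) = (1 - \<i>) / 2" "SqrtNOT_gate 1 $$ (0,1) = (1 + \<i>) / 2"
    "SqrtNOT_gate 1 $$ (1,0) = (1 + \<i>) / 2" "SqrtNOT_gate 1 $$ (1,1) = (1 - \<i>) / 2"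
    by (simp_all add: SqrtNOT_gate_def flip_last_def)
  have "SqrtNOT_gate 1 \<in> carrier_mat 2 2"
    by (simp add: SqrtNOT_gate_def carrier_matI)
  then show ?thesis
    by (rule unitary_2) (simp_all only: entries, simp_all add: complex_eq_iff)
qed

lemma last_qubit_gate_kron:
  assumes "1 \<le> n"
  shows "mat (2 ^ n) (2 ^ n) (\<lambda>(r,c). if r = c then p (even c) else if r = flip_last c then q (even c) else 0)
    = kron (1\<^sub>m (2 ^ (n - 1)))
        (mat 2 2 (\<lambda>(r,c). if r = c then p (even c) else if r = flip_last c then q (even c) else 0))"
    (is "?G = ?K")
proof (rule eq_matI)
  have N: "(2::nat) ^ n = 2 ^ (n - 1) * 2" using assms by (cases n) simp_all
  fix i j assume "i < dim_row ?K" "j < dim_col ?K"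
  then have i: "i < 2 ^ (n - 1) * 2" and j: "j < 2 ^ (n - 1) * 2" by simp_all
  have "i = j \<longleftrightarrow> i div 2 = j div 2 \<and> i mod 2 = j mod 2"
    by (metis div_mult_mod_eq)
  then show "?G $$ (i,j) = ?K $$ (i,j)"
    using i j by (auto simp: index_kron N eq_flip_last_iff less_mult_imp_div_less)
qed (use assms in \<open>simp_all add: power_eq_if\<close>)

lemma SqrtI_gate_kron: "1 \<le> n \<Longrightarrow> SqrtI_gate n = kron (1\<^sub>m (2 ^ (n - 1))) (SqrtI_gate 1)"
  using last_qubit_gate_kron[of n "\<lambda>e. (if e then 1 else - 1) / complex_of_real (sqrt 2)"
      "\<lambda>_. 1 / complex_of_real (sqrt 2)"]
  by (simp add: SqrtI_gate_def)

lemma SqrtNOT_gate_kron: "1 \<le> n \<Longrightarrow> SqrtNOT_gate n = kron (1\<^sub>m (2 ^ (n - 1))) (SqrtNOT_gate 1)"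
  using last_qubit_gate_kron[of n "\<lambda>_. (1 - \<i>) / 2" "\<lambda>_. (1 + \<i>) / 2"]
  by (simp add: SqrtNOT_gate_def)

lemma unitary_lift_last_qubit:
  assumes "1 \<le> n" "unitary_op 2 U"
  shows "unitary_op (2 ^ n) (kron (1\<^sub>m (2 ^ (n - 1))) U)"
proof -
  have "(2::nat) ^ n = 2 ^ (n - 1) * 2" using assms(1) by (cases n) simp_all
  then show ?thesis
    using assms(2) by (simp add: unitary_kron unitary_one)
qed

section \<open>Partial traces\<close>

text \<open>\<open>p t a\<close> is the index of the basis vector whose traced-out component is \<open>t\<close> and whose
  remaining component is \<open>a\<close>.\<close>

definition partial_trace :: "(nat \<Rightarrow> nat \<Rightarrow> nat) \<Rightarrow> nat \<Rightarrow> nat \<Rightarrow> complex mat \<Rightarrow> complex mat" where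
  "partial_trace p K M \<rho> = mat M M (\<lambda>(a,b). \<Sum>t<K. \<rho> $$ (p t a, p t b))"

lemma partial_trace_carrier_mat: "partial_trace p K M \<rho> \<in> carrier_mat M M"
  by (simp add: partial_trace_def)

lemma isometry_columns_orthonormal:
  assumes "A \<in> carrier_mat K K" "adj A * A = 1\<^sub>m K" "s < K" "s' < K"
  shows "(\<Sum>t<K. A $$ (t,s) * cnj (A $$ (t,s'))) = (if s = s' then 1 else 0)"
proof -
  have "(\<Sum>t<K. A $$ (t,s) * cnj (A $$ (t,s'))) = (adj A * A) $$ (s',s)"
    using assms by (subst index_mult_mat_sum[of _ _ _ _ K]) (auto simp: mult.commute)
  then show ?thesis
    using assms by auto
qed

lemma sum_swap_inward:
  "(\<Sum>t\<in>T. \<Sum>a\<in>A. \<Sum>b\<in>B. f t a b) = (\<Sum>a\<in>A. \<Sum>b\<in>B. \<Sum>t\<in>T. f t a b)"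
  by (simp only: sum.swap[of _ T])

locale index_layout =
  fixes p :: "nat \<Rightarrow> nat \<Rightarrow> nat" and K M N :: nat
  assumes sum_reindex: "\<And>f :: nat \<Rightarrow> complex. (\<Sum>k<N. f k) = (\<Sum>t<K. \<Sum>a<M. f (p t a))"
    and layout_less: "t < K \<Longrightarrow> a < M \<Longrightarrow> p t a < N"
begin

lemma index_conj_tensor_gate:
  assumes G: "G \<in> carrier_mat N N" and \<rho>: "\<rho> \<in> carrier_mat N N"
    and G_entry: "\<And>t a t' a'. t < K \<Longrightarrow> a < M \<Longrightarrow> t' < K \<Longrightarrow> a' < M \<Longrightarrow>
      G $$ (p t a, p t' a') = A $$ (t,t') * B $$ (a,a')"
    and "t < K" "u < M" "v < M"
  shows "(G * \<rho> * adj G) $$ (p t u, p t v) = (\<Sum>t1<K. \<Sum>t2<K. A $$ (t,t1) * cnj (A $$ (t,t2)) *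
    (\<Sum>a<M. \<Sum>b<M. B $$ (u,a) * \<rho> $$ (p t1 a, p t2 b) * cnj (B $$ (v,b))))"
proof -
  have "(G * \<rho> * adj G) $$ (p t u, p t v)
      = (\<Sum>k<N. \<Sum>l<N. G $$ (p t u, k) * \<rho> $$ (k,l) * cnj (G $$ (p t v, l)))"
    using assms(4-6) layout_less by (intro index_mult_mat_adj_sum[OF G \<rho>])
  also have "\<dots> = (\<Sum>t1<K. \<Sum>a<M. \<Sum>t2<K. \<Sum>b<M.
      A $$ (t,t1) * cnj (A $$ (t,t2)) * (B $$ (u,a) * \<rho> $$ (p t1 a, p t2 b) * cnj (B $$ (v,b))))"
    using assms(4-6) by (simp add: sum_reindex G_entry mult_ac)
  also have "\<dots> = (\<Sum>t1<K. \<Sum>t2<K. \<Sum>a<M. \<Sum>b<M.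
      A $$ (t,t1) * cnj (A $$ (t,t2)) * (B $$ (u,a) * \<rho> $$ (p t1 a, p t2 b) * cnj (B $$ (v,b))))"
    by (rule sum.cong[OF refl], rule sum.swap)
  finally show ?thesis
    by (simp add: sum_distrib_left)
qed

lemma partial_trace_conj_tensor_gate:
  assumes G: "G \<in> carrier_mat N N" and \<rho>: "\<rho> \<in> carrier_mat N N"
    and A: "A \<in> carrier_mat K K" "adj A * A = 1\<^sub>m K" and B: "B \<in> carrier_mat M M"
    and G_entry: "\<And>t a t' a'. t < K \<Longrightarrow> a < M \<Longrightarrow> t' < K \<Longrightarrow> a' < M \<Longrightarrow>
      G $$ (p t a, p t' a') = A $$ (t,t') * B $$ (a,a')"
  shows "partial_trace p K M (G * \<rho> * adj G) = B * partial_trace p K M \<rho> * adj B"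
proof (rule eq_matI)
  fix u v assume "u < dim_row (B * partial_trace p K M \<rho> * adj B)" "v < dim_col (B * partial_trace p K M \<rho> * adj B)"
  then have u: "u < M" and v: "v < M" using B by simp_all
  define Y where "Y t1 t2 = (\<Sum>a<M. \<Sum>b<M. B $$ (u,a) * \<rho> $$ (p t1 a, p t2 b) * cnj (B $$ (v,b)))" for t1 t2
  have "partial_trace p K M (G * \<rho> * adj G) $$ (u,v) = (\<Sum>t<K. (G * \<rho> * adj G) $$ (p t u, p t v))"
    using u v by (simp add: partial_trace_def)
  also have "\<dots> = (\<Sum>t<K. \<Sum>t1<K. \<Sum>t2<K. A $$ (t,t1) * cnj (A $$ (t,t2)) * Y t1 t2)"
    using u v by (simp add: index_conj_tensor_gate[OF G \<rho> G_entry] Y_def)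
  also have "\<dots> = (\<Sum>t1<K. \<Sum>t2<K. \<Sum>t<K. A $$ (t,t1) * cnj (A $$ (t,t2)) * Y t1 t2)"
    by (rule sum_swap_inward)
  also have "\<dots> = (\<Sum>t1<K. \<Sum>t2<K. (\<Sum>t<K. A $$ (t,t1) * cnj (A $$ (t,t2))) * Y t1 t2)"
    by (simp add: sum_distrib_right)
  also have "\<dots> = (\<Sum>t1<K. \<Sum>t2<K. if t1 = t2 then Y t1 t2 else 0)"
    using A by (intro sum.cong refl) (simp add: isometry_columns_orthonormal)
  also have "\<dots> = (\<Sum>t<K. Y t t)"
    by simp
  also have "\<dots> = (\<Sum>a<M. \<Sum>b<M. \<Sum>t<K. B $$ (u,a) * \<rho> $$ (p t a, p t b) * cnj (B $$ (v,b)))"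
    unfolding Y_def by (rule sum_swap_inward)
  also have "\<dots> = (B * partial_trace p K M \<rho> * adj B) $$ (u,v)"
    by (subst index_mult_mat_adj_sum[OF B partial_trace_carrier_mat u v])
      (simp add: partial_trace_def sum_distrib_left sum_distrib_right)
  finally show "partial_trace p K M (G * \<rho> * adj G) $$ (u,v) = (B * partial_trace p K M \<rho> * adj B) $$ (u,v)" .
qed (use B in \<open>simp_all add: partial_trace_def\<close>)

end

text \<open>The layout of \<open>H\<^sub>L \<otimes> H\<^sub>d \<otimes> H\<^sub>R\<close> with the middle factor kept: \<open>t = l * R + r\<close>
  encodes the components \<open>l < L\<close> and \<open>r < R\<close>.\<close>

definition middle_index :: "nat \<Rightarrow> nat \<Rightarrow> nat \<Rightarrow> nat \<Rightarrow> nat" where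
  "middle_index d R t a = (t div R * d + a) * R + t mod R"

lemma middle_index_less:
  assumes "t < L * R" "a < d"
  shows "middle_index d R t a < L * d * R"
proof -
  have "0 < R"
    using assms(1) by (auto intro: Nat.gr0I)
  then have "t div R < L" "t mod R < R"
    using assms(1) by (simp_all add: less_mult_imp_div_less)
  then show ?thesis
    using assms(2) by (simp add: middle_index_def mult_index_less)
qed

lemma sum_middle_index:
  fixes f :: "nat \<Rightarrow> 'a::comm_monoid_add"
  shows "(\<Sum>k<L * d * R. f k) = (\<Sum>t<L * R. \<Sum>a<d. f (middle_index d R t a))"
proof -
  have "(\<Sum>k<L * d * R. f k) = (\<Sum>l<L. \<Sum>a<d. \<Sum>r<R. f ((l * d + a) * R + r))"
    by (simp add: sum_lessThan_mult)
  also have "\<dots> = (\<Sum>l<L. \<Sum>r<R. \<Sum>a<d. f ((l * d + a) * R + r))"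
    by (rule sum.cong[OF refl], rule sum.swap)
  also have "\<dots> = (\<Sum>t<L * R. \<Sum>a<d. f (middle_index d R t a))"
    by (simp add: sum_lessThan_mult middle_index_def)
  finally show ?thesis .
qed

lemma index_layout_middle_index: "index_layout (middle_index d R) (L * R) d (L * d * R)"
  by unfold_locales (simp_all add: sum_middle_index middle_index_less)

lemma Red_eq_partial_trace:
  "Red (length ls) (ls @ d # rs) \<rho>
    = partial_trace (middle_index d (prod_list rs)) (prod_list ls * prod_list rs) d \<rho>"
  by (rule eq_matI) (simp_all add: Red_def Let_def partial_trace_def sum_lessThan_mult middle_index_def)

lemma index_kron3_middle_index:
  assumes A: "A \<in> carrier_mat L L" and B: "B \<in> carrier_mat d d" and C: "C \<in> carrier_mat R R"
    and "t < L * R" "a < d" "t' < L * R" "a' < d"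
  shows "kron (kron A B) C $$ (middle_index d R t a, middle_index d R t' a')
    = kron A C $$ (t,t') * B $$ (a,a')"
proof -
  have "0 < R" using assms(4) by (auto intro: Nat.gr0I)
  then show ?thesis
    using assms by (simp add: middle_index_def index_kron_block[OF kron_carrier_mat[OF A B] C]
        index_kron_block[OF A B] index_kron less_mult_imp_div_less mult_index_less)
qed

lemma Red_Dgate_kron:
  assumes A: "unitary_op (prod_list ls) A" and C: "unitary_op (prod_list rs) C"
    and B: "B \<in> carrier_mat d d" and \<rho>: "\<rho> \<in> carrier_mat (prod_list (ls @ d # rs)) (prod_list (ls @ d # rs))"
  shows "Red (length ls) (ls @ d # rs) (Dgate (kron (kron A B) C) \<rho>) = Dgate B (Red (length ls) (ls @ d # rs) \<rho>)"
proof -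
  let ?L = "prod_list ls" and ?R = "prod_list rs"
  have Ac: "A \<in> carrier_mat ?L ?L" and Cc: "C \<in> carrier_mat ?R ?R"
    using A C by (simp_all add: unitary_op_def)
  have AC: "kron A C \<in> carrier_mat (?L * ?R) (?L * ?R)" "adj (kron A C) * kron A C = 1\<^sub>m (?L * ?R)"
    using unitary_kron[OF A C] by (simp_all add: unitary_op_def)
  have \<rho>': "\<rho> \<in> carrier_mat (?L * d * ?R) (?L * d * ?R)"
    using \<rho> by (simp add: mult.assoc)
  show ?thesis
    unfolding Red_eq_partial_trace Dgate_def
    using index_kron3_middle_index[OF Ac B Cc]
    by (intro index_layout.partial_trace_conj_tensor_gate[OF index_layout_middle_index, where A = "kron A C"]
        kron_carrier_mat Ac Cc B \<rho>' AC)
qed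

lemma Red_append_cong:
  assumes "j = length ls" "j' = length ls'" "prod_list ls = prod_list ls'" "prod_list rs = prod_list rs'"
  shows "Red j (ls @ d # rs) \<rho> = Red j' (ls' @ d # rs') \<rho>"
  using assms by (simp add: Red_eq_partial_trace)

section \<open>Syntactical trees\<close>

abbreviation next_level :: "form list \<Rightarrow> form list" where
  "next_level l \<equiv> concat (map expand l)"

lemma level_one: "level \<alpha> (Suc 0) = [\<alpha>]"
  by (simp add: level_def)

lemma level_Suc: "1 \<le> i \<Longrightarrow> level \<alpha> (Suc i) = next_level (level \<alpha> i)"
  by (cases i) (simp_all add: level_def)

lemma concat_map_concat_map:
  "concat (map g (concat (map h xs))) = concat (map (\<lambda>x. concat (map g (h x))) xs)"
  by (induction xs) simp_all

lemma funpow_next_level: "(next_level ^^ k) xs = concat (map (\<lambda>x. (next_level ^^ k) [x]) xs)"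
proof (induction k arbitrary: xs)
  case 0
  then show ?case by (induction xs) simp_all
next
  case (Suc k)
  have "(next_level ^^ Suc k) xs = (next_level ^^ k) (next_level xs)"
    by (simp add: funpow_Suc_right del: funpow.simps)
  also have "\<dots> = concat (map (\<lambda>x. concat (map (\<lambda>y. (next_level ^^ k) [y]) (expand x))) xs)"
    by (simp only: Suc.IH[of "next_level xs"] concat_map_concat_map)
  also have "\<dots> = concat (map (\<lambda>x. (next_level ^^ Suc k) [x]) xs)"
    by (simp add: funpow_Suc_right Suc.IH[symmetric] del: funpow.simps)
  finally show ?case .
qed

lemma level_Suc_expand: "1 \<le> i \<Longrightarrow> level \<alpha> (Suc i) = concat (map (\<lambda>x. level x i) (expand \<alpha>))"
  by (cases i) (simp_all add: level_def funpow_Suc_right funpow_next_level[of _ "expand \<alpha>"]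
      del: funpow.simps)

lemma height_pos: "1 \<le> height x"
  by (induction x) simp_all

lemma At_pos: "1 \<le> At x"
  by (induction x) simp_all

lemma height_expand_less: "\<not> atomic x \<Longrightarrow> y \<in> set (expand x) \<Longrightarrow> height y < height x"
  by (cases x) auto

lemma expand_atomic: "atomic x \<Longrightarrow> expand x = [x]"
  by (cases x) simp_all

lemma height_level_nonatomic:
  "1 \<le> i \<Longrightarrow> y \<in> set (level \<gamma> i) \<Longrightarrow> \<not> atomic y \<Longrightarrow> i + height y \<le> Suc (height \<gamma>)"
proof (induction i arbitrary: y rule: nat_induct_at_least)
  case base
  then show ?case by (simp add: level_one)
next
  case (Suc i)
  then obtain x where x: "x \<in> set (level \<gamma> i)" and y: "y \<in> set (expand x)"
    by (auto simp: level_Suc)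
  with Suc.prems(2) have "\<not> atomic x"
    by (auto simp: expand_atomic)
  with Suc.IH[OF x] height_expand_less[OF _ y] show ?case
    by fastforce
qed

lemma occ_nonatomic_less_height:
  assumes "occ \<gamma> i j \<beta>" "\<not> atomic \<beta>"
  shows "i < height \<gamma>"
proof -
  obtain y where y: "y \<in> set (expand \<beta>)"
    by (cases \<beta>) auto
  have "1 \<le> height y" "height y < height \<beta>"
    using height_pos height_expand_less[OF assms(2) y] by simp_all
  moreover have "i + height \<beta> \<le> Suc (height \<gamma>)"
    using assms by (intro height_level_nonatomic) (auto simp: occ_def)
  ultimately show ?thesis by simp
qed

lemma prod_list_dims_next_level:
  "prod_list (map (\<lambda>b. 2 ^ At b) (next_level l)) = prod_list (map (\<lambda>b. (2::nat) ^ At b) l)"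
proof (induction l)
  case (Cons x l)
  then show ?case by (cases x) (simp_all add: power_add)
qed simp

lemma prod_list_dims_level: "1 \<le> i \<Longrightarrow> prod_list (map (\<lambda>b. 2 ^ At b) (level \<gamma> i)) = (2::nat) ^ At \<gamma>"
proof (induction i rule: nat_induct_at_least)
  case base
  then show ?case by (simp add: level_one)
next
  case (Suc i)
  then show ?case by (simp add: level_Suc prod_list_dims_next_level)
qed

lemma subformulas_eq: "subformulas \<gamma> = insert \<gamma> (\<Union>x \<in> set (if atomic \<gamma> then [] else expand \<gamma>). subformulas x)"
  by (cases \<gamma>) auto

lemma occ_expand:
  assumes "\<not> atomic \<gamma>" "x \<in> set (expand \<gamma>)" "occ x i j \<beta>"
  shows "\<exists>j'. occ \<gamma> (Suc i) j' \<beta>"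
proof -
  obtain xs ys where split: "expand \<gamma> = xs @ x # ys"
    using assms(2) by (meson split_list)
  have i: "1 \<le> i" "i \<le> height x" and j: "j < length (level x i)" "level x i ! j = \<beta>"
    using assms(3) by (simp_all add: occ_def)
  have "Suc i \<le> height \<gamma>"
    using i height_expand_less[OF assms(1,2)] by simp
  moreover have "level \<gamma> (Suc i) = concat (map (\<lambda>y. level y i) xs) @ level x i @ concat (map (\<lambda>y. level y i) ys)"
    using i by (simp add: level_Suc_expand split)
  ultimately have "occ \<gamma> (Suc i) (length (concat (map (\<lambda>y. level y i) xs)) + j) \<beta>"
    using i j by (simp add: occ_def nth_append)
  then show ?thesis ..
qed

lemma subformula_occ: "\<beta> \<in> subformulas \<gamma> \<Longrightarrow> \<exists>i j. occ \<gamma> i j \<beta>"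
proof (induction "height \<gamma>" arbitrary: \<gamma> rule: less_induct)
  case less
  show ?case
  proof (cases "\<beta> = \<gamma>")
    case True
    then have "occ \<gamma> 1 0 \<beta>"
      using height_pos[of \<gamma>] by (simp add: occ_def level_one)
    then show ?thesis by blast
  next
    case False
    with less.prems obtain x where na: "\<not> atomic \<gamma>" and x: "x \<in> set (expand \<gamma>)" and "\<beta> \<in> subformulas x"
      by (subst (asm) subformulas_eq) (auto split: if_splits)
    with less.hyps[OF height_expand_less[OF na x]] obtain i j where "occ x i j \<beta>"
      by blast
    with occ_expand[OF na x] show ?thesis by blast
  qed
qed

section \<open>Holistic models\<close>

lemma unitary_gate_item:
  assumes T: "unitary_op 2 T"
  shows "unitary_op (2 ^ At x) (gate_item T x)"
proof (cases x)
  case (Neg b)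
  have "1 \<le> At b" by (rule At_pos)
  with Neg show ?thesis
    by (simp add: unitary_conjT[OF T] NOT_gate_flip_last_if unitary_perm_gate_flip_last_if)
next
  case (SqId b)
  have "unitary_op (2 ^ At b) (SqrtI_gate (At b))"
    by (subst SqrtI_gate_kron[OF At_pos]) (rule unitary_lift_last_qubit[OF At_pos unitary_SqrtI_1])
  with SqId show ?thesis
    by (simp add: unitary_conjT[OF T])
next
  case (SqNeg b)
  have "unitary_op (2 ^ At b) (SqrtNOT_gate (At b))"
    by (subst SqrtNOT_gate_kron[OF At_pos]) (rule unitary_lift_last_qubit[OF At_pos unitary_SqrtNOT_1])
  with SqNeg show ?thesis
    by (simp add: unitary_conjT[OF T])
next
  case (Xor b c)
  have "1 \<le> At c" by (rule At_pos)
  with Xor show ?thesis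
    by (simp add: unitary_conjT[OF T] XOR_gate_flip_last_if unitary_perm_gate_flip_last_if)
next
  case (Toff b c d)
  have "1 \<le> At d" by (rule At_pos)
  with Toff show ?thesis
    by (simp add: unitary_conjT[OF T] Toffoli_gate_flip_last_if unitary_perm_gate_flip_last_if)
qed (simp_all add: unitary_one)

lemma unitary_kron_list_gate_item:
  "unitary_op 2 T \<Longrightarrow> unitary_op (prod_list (map (\<lambda>b. 2 ^ At b) l)) (kron_list (map (gate_item T) l))"
  by (induction l) (simp_all add: unitary_one unitary_kron unitary_gate_item)

lemma holistic_density: "holistic T Hol \<Longrightarrow> 1 \<le> i \<Longrightarrow> i \<le> height \<alpha> \<Longrightarrow> density (2 ^ At \<alpha>) (Hol \<alpha> i)"
  by (simp add: holistic_def)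

lemma holistic_step:
  "holistic T Hol \<Longrightarrow> 1 \<le> i \<Longrightarrow> i < height \<alpha> \<Longrightarrow> Hol \<alpha> i = Dgate (level_gate T \<alpha> i) (Hol \<alpha> (Suc i))"
  by (simp add: holistic_def)

lemma hol_meaning_eq_ctx:
  assumes "holistic T Hol" "occ \<gamma> i j \<beta>"
  shows "hol_meaning Hol \<gamma> \<beta> = ctx Hol \<gamma> i j"
proof -
  have "ctx Hol \<gamma> i' j' = ctx Hol \<gamma> i j" if "occ \<gamma> i' j' \<beta>" for i' j'
    using assms that unfolding holistic_def by blast
  then show ?thesis
    unfolding hol_meaning_def using assms(2) by (blast intro: someI2)
qed

lemma ctx_unary_step:
  assumes T: "truth_perspective T" and H: "holistic T Hol"
    and occ: "occ \<gamma> i j \<beta>'" and expand: "expand \<beta>' = [\<beta>]" and na: "\<not> atomic \<beta>'"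
  shows "\<exists>j'. occ \<gamma> (Suc i) j' \<beta> \<and> ctx Hol \<gamma> i j = Dgate (gate_item T \<beta>') (ctx Hol \<gamma> (Suc i) j')"
proof -
  let ?dims = "map (\<lambda>b. (2::nat) ^ At b)" and ?gates = "\<lambda>l. kron_list (map (gate_item T) l)"
  define pre where "pre = take j (level \<gamma> i)"
  define post where "post = drop (Suc j) (level \<gamma> i)"
  define \<rho> where "\<rho> = Hol \<gamma> (Suc i)"
  have i: "1 \<le> i" and j: "j = length pre" and level: "level \<gamma> i = pre @ \<beta>' # post"
    using occ by (auto simp: occ_def pre_def post_def id_take_nth_drop)
  have At: "At \<beta>' = At \<beta>"
    using expand na by (cases \<beta>') simp_all
  have i_less: "i < height \<gamma>"
    using occ na by (rule occ_nonatomic_less_height)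
  have next_level: "level \<gamma> (Suc i) = next_level pre @ \<beta> # next_level post"
    using i by (simp add: level_Suc level expand)
  have occ': "occ \<gamma> (Suc i) (length (next_level pre)) \<beta>"
    using i i_less by (simp add: occ_def next_level)
  have "\<rho> \<in> carrier_mat (2 ^ At \<gamma>) (2 ^ At \<gamma>)"
    using holistic_density[OF H, of "Suc i"] i_less by (simp add: \<rho>_def density_def)
  then have \<rho>: "\<rho> \<in> carrier_mat (prod_list (?dims pre @ 2 ^ At \<beta> # ?dims post))
      (prod_list (?dims pre @ 2 ^ At \<beta> # ?dims post))"
    using prod_list_dims_level[OF i, of \<gamma>] by (simp add: level At)
  have gate: "gate_item T \<beta>' \<in> carrier_mat (2 ^ At \<beta>) (2 ^ At \<beta>)"
    using unitary_gate_item[of T \<beta>'] T by (simp add: truth_perspective_def unitary_op_def At)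
  have "ctx Hol \<gamma> i j = Red (length (?dims pre)) (?dims pre @ 2 ^ At \<beta> # ?dims post)
      (Dgate (kron (kron (?gates pre) (gate_item T \<beta>')) (?gates post)) \<rho>)"
    using holistic_step[OF H i i_less]
    by (simp add: ctx_def level At j level_gate_def \<rho>_def kron_list_append kron_assoc)
  also have "\<dots> = Dgate (gate_item T \<beta>') (Red (length (?dims pre)) (?dims pre @ 2 ^ At \<beta> # ?dims post) \<rho>)"
    using T unfolding truth_perspective_def
    by (intro Red_Dgate_kron unitary_kron_list_gate_item gate \<rho>)
  also have "Red (length (?dims pre)) (?dims pre @ 2 ^ At \<beta> # ?dims post) \<rho> = ctx Hol \<gamma> (Suc i) (length (next_level pre))"
    by (simp add: ctx_def next_level \<rho>_def) (rule Red_append_cong; simp add: prod_list_dims_next_level)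
  finally show ?thesis
    using occ' by blast
qed

lemma hol_meaning_unary:
  assumes "truth_perspective T" "holistic T Hol"
    and "\<beta>' \<in> subformulas \<gamma>" "expand \<beta>' = [\<beta>]" "\<not> atomic \<beta>'"
  shows "hol_meaning Hol \<gamma> \<beta>' = Dgate (gate_item T \<beta>') (hol_meaning Hol \<gamma> \<beta>)"
proof -
  obtain i j where occ: "occ \<gamma> i j \<beta>'"
    using subformula_occ[OF assms(3)] by blast
  with ctx_unary_step[OF assms(1,2) occ assms(4,5)] obtain j' where
    "occ \<gamma> (Suc i) j' \<beta>" "ctx Hol \<gamma> i j = Dgate (gate_item T \<beta>') (ctx Hol \<gamma> (Suc i) j')"
    by blast
  with occ show ?thesis
    using hol_meaning_eq_ctx[OF assms(2)] by simp
qed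

theorem theorem4p8:
  fixes T :: "complex mat" and Hol :: "form \<Rightarrow> nat \<Rightarrow> complex mat"
    and \<gamma> \<beta> :: form
  assumes "truth_perspective T" and "holistic T Hol"
  shows "(Neg \<beta> \<in> subformulas \<gamma> \<longrightarrow>
            hol_meaning Hol \<gamma> (Neg \<beta>) =
            Dgate (conjT T (At \<beta>) (NOT_gate (At \<beta>))) (hol_meaning Hol \<gamma> \<beta>))
       \<and> (SqId \<beta> \<in> subformulas \<gamma> \<longrightarrow>
            hol_meaning Hol \<gamma> (SqId \<beta>) =
            Dgate (conjT T (At \<beta>) (SqrtI_gate (At \<beta>))) (hol_meaning Hol \<gamma> \<beta>))
       \<and> (SqNeg \<beta> \<in> subformulas \<gamma> \<longrightarrow>
            hol_meaning Hol \<gamma> (SqNeg \<beta>) =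
            Dgate (conjT T (At \<beta>) (SqrtNOT_gate (At \<beta>))) (hol_meaning Hol \<gamma> \<beta>))"
  using hol_meaning_unary[OF assms, of "Neg \<beta>" \<gamma> \<beta>] hol_meaning_unary[OF assms, of "SqId \<beta>" \<gamma> \<beta>]
    hol_meaning_unary[OF assms, of "SqNeg \<beta>" \<gamma> \<beta>]
  by simp

end
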